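(* Let $\theta:(0,\infty)\to\mathbb{R}$ satisfy $0<\theta(x)\le 2\arctan(x/2)$ for all $x>0$. Then for all $\Lambda\ge 0$, $m>0$ and $\Delta t>0$ satisfying $\Delta t^2\Lambda/m<4$, we have $$\left|\cos(\theta(x))-\frac{\Delta t^2(\Lambda/m)}{2}\,\frac{\sin(\theta(x))}{x}\right|<1\quad\text{for all }x>0.$$ *)

theory Defs
  imports Complex_Main
begin

end

theory Submission
  imports Defs
begin

(* Write s = \<theta>(x)/2 and c = \<Delta>t^2 \<Lambda>/(2m), so 0 \<le> c < 2. The hypothesis on \<theta> gives
   0 < \<theta>(x) < \<pi> and tan s \<le> x/2, and the half-angle formula sin \<theta> = tan s (1 + cos \<theta>)
   then yields c sin \<theta> / x \<le> c (1 + cos \<theta>) / 2 < 1 + cos \<theta>.  This is the lower bound;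
   the upper bound is just cos \<theta> < 1 together with sin \<theta> > 0. *)

lemma tan_le_of_le_arctan:
  fixes s y :: real
  assumes "- (pi / 2) < s" and "s \<le> arctan y"
  shows "tan s \<le> y"
proof -
  have "s < pi / 2"
    using assms(2) arctan_ubound[of y] by linarith
  then have "arctan (tan s) \<le> arctan y"
    using assms by (simp add: arctan_tan)
  then show ?thesis
    by (simp add: arctan_le_iff)
qed

lemma cos_gt_minus_one:
  fixes \<theta> :: real
  assumes "\<bar>\<theta>\<bar> < pi"
  shows "cos \<theta> > -1"
proof -
  have "cos pi < cos \<bar>\<theta>\<bar>"
    using assms by (intro cos_monotone_0_pi) auto
  then show ?thesis
    by simp
qed

lemma sin_eq_tan_half_mult:
  fixes \<theta> :: real
  assumes "cos \<theta> \<noteq> -1"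
  shows "sin \<theta> = tan (\<theta> / 2) * (1 + cos \<theta>)"
proof -
  have "1 + cos \<theta> \<noteq> 0"
    using assms by linarith
  then show ?thesis
    using tan_half[of "\<theta> / 2"] by (simp add: field_simps)
qed

lemma sin_div_le_half_one_plus_cos:
  fixes \<theta> x :: real
  assumes "\<bar>\<theta>\<bar> < pi" and "x > 0" and "tan (\<theta> / 2) \<le> x / 2"
  shows "sin \<theta> / x \<le> (1 + cos \<theta>) / 2"
proof -
  have cos_pos: "1 + cos \<theta> > 0"
    using cos_gt_minus_one[OF assms(1)] by linarith
  have "sin \<theta> = tan (\<theta> / 2) * (1 + cos \<theta>)"
    using cos_pos by (intro sin_eq_tan_half_mult) linarith
  also have "\<dots> \<le> x / 2 * (1 + cos \<theta>)"
    using assms(3) cos_pos by (intro mult_right_mono) auto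
  finally show ?thesis
    using assms(2) by (simp add: divide_le_eq mult.commute)
qed

lemma abs_cos_minus_scaled_sin_div_lt_one:
  fixes \<theta> x c :: real
  assumes "0 < \<theta>" and "\<theta> < pi" and "x > 0" and "tan (\<theta> / 2) \<le> x / 2"
    and "0 \<le> c" and "c < 2"
  shows "\<bar>cos \<theta> - c * (sin \<theta> / x)\<bar> < 1"
proof -
  have "cos \<theta> < cos 0"
    using assms(1,2) by (intro cos_monotone_0_pi) auto
  moreover have "c * (sin \<theta> / x) \<ge> 0"
    using assms(1-3,5) sin_gt_zero[of \<theta>] by simp
  ultimately have upper: "cos \<theta> - c * (sin \<theta> / x) < 1"
    by simp
  have cos_pos: "1 + cos \<theta> > 0"
    using cos_gt_minus_one[of \<theta>] assms(1,2) by simp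
  have "c * (sin \<theta> / x) \<le> c * ((1 + cos \<theta>) / 2)"
    using assms by (intro mult_left_mono sin_div_le_half_one_plus_cos) auto
  also have "\<dots> < 1 + cos \<theta>"
    using mult_strict_right_mono[OF assms(6), of "(1 + cos \<theta>) / 2"] cos_pos by simp
  finally have lower: "cos \<theta> - c * (sin \<theta> / x) > -1"
    by simp
  show ?thesis
    using upper lower by simp
qed

theorem corollary1:
  fixes \<theta> :: "real \<Rightarrow> real" and \<Lambda> m \<Delta>t :: real
  assumes theta_bounds: "\<And>x. x > 0 \<Longrightarrow> 0 < \<theta> x \<and> \<theta> x \<le> 2 * arctan (x / 2)"
    and "\<Lambda> \<ge> 0" and "m > 0" and "\<Delta>t > 0"
    and "\<Delta>t ^ 2 * \<Lambda> / m < 4"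
  shows "\<forall>x > 0. \<bar>cos (\<theta> x) - (\<Delta>t ^ 2 * (\<Lambda> / m) / 2) * (sin (\<theta> x) / x)\<bar> < 1"
proof (intro allI impI)
  fix x :: real
  assume "x > 0"
  then have pos: "0 < \<theta> x" and le_arctan: "\<theta> x / 2 \<le> arctan (x / 2)"
    using theta_bounds[of x] by auto
  have "\<theta> x < pi"
    using le_arctan arctan_ubound[of "x / 2"] by linarith
  moreover have "tan (\<theta> x / 2) \<le> x / 2"
    using pos le_arctan pi_gt_zero by (intro tan_le_of_le_arctan) linarith+
  moreover have "0 \<le> \<Delta>t ^ 2 * (\<Lambda> / m) / 2"
    using assms(2,3) by simp
  moreover have "\<Delta>t ^ 2 * (\<Lambda> / m) / 2 < 2"
    using assms(3,5) by (simp add: field_simps)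
  ultimately show "\<bar>cos (\<theta> x) - (\<Delta>t ^ 2 * (\<Lambda> / m) / 2) * (sin (\<theta> x) / x)\<bar> < 1"
    using pos \<open>x > 0\<close> by (intro abs_cos_minus_scaled_sin_div_lt_one) auto
qed

end
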